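(* For all $u_1,u_2\in[0,1]$: (i) $\lim_{\lambda\to\infty}C_\lambda(u_1,u_2)=\max\{u_1+u_2-1,0\}$ (the Fréchet–Hoeffding lower bound); (ii) $\lim_{\lambda\to-\infty}C_\lambda(u_1,u_2)=\min\{u_1,u_2\}$ (the Fréchet–Hoeffding upper bound).
   Context: For $\lambda\in\mathbb{R}$ define $\phi_\lambda$ on $[0,\infty)$ by $\phi_\lambda(x)=\frac{1}{\lambda(\lambda+1)}(x^{\lambda+1}-x+\lambda(1-x))$ for $\lambda\neq-1,0$; $\phi_0(x)=1-x+x\log x$; $\phi_{-1}(x)=x-1-\log x$; values at $x=0$ are limits, so $\phi_\lambda(0)=1/(\lambda+1)$ for $\lambda>-1$ and $\phi_\lambda(0)=\infty$ for $\lambda\le-1$. On $[0,1]$, $\phi_\lambda$ is convex, strictly decreasing, $\phi_\lambda(1)=0$. The pseudoinverse is $\phi_\lambda^{[-1]}(t)=\phi_\lambda^{-1}(t)$ (inverse of $\phi_\lambda|_{[0,1]}$) for $0\le t<\phi_\lambda(0)$ and $0$ for $t\ge\phi_\lambda(0)$. The power-divergence (PD) copula is $C_\lambda(u_1,u_2)=\phi_\lambda^{[-1]}(\phi_\lambda(u_1)+\phi_\lambda(u_2))$, $u_1,u_2\in[0,1]$ (with $\phi_\lambda^{[-1]}(\infty)=0$). *)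

theory Defs
  imports "HOL-Analysis.Analysis" "HOL-Library.Extended_Real"
begin

text \<open>Power-divergence generator on [0,\<infinity>), extended-real valued so that the
  value \<infinity> at x = 0 for lambda \<le> -1 is representable.\<close>
definition pd_phi :: "real \<Rightarrow> real \<Rightarrow> ereal" where
  "pd_phi lam x =
     (if x = 0 then (if lam > -1 then ereal (1 / (lam + 1)) else \<infinity>)
      else if lam = 0 then ereal (1 - x + x * ln x)
      else if lam = -1 then ereal (x - 1 - ln x)
      else ereal ((x powr (lam + 1) - x + lam * (1 - x)) / (lam * (lam + 1))))"

definition pd_phi_pinv :: "real \<Rightarrow> ereal \<Rightarrow> real" where
  "pd_phi_pinv lam t =
     (if 0 \<le> t \<and> t < pd_phi lam 0
      then (THE x. x \<in> {0..1} \<and> pd_phi lam x = t)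
      else 0)"

definition pd_copula :: "real \<Rightarrow> real \<Rightarrow> real \<Rightarrow> real" where
  "pd_copula lam u1 u2 = pd_phi_pinv lam (pd_phi lam u1 + pd_phi lam u2)"

end

theory Submission
  imports Defs "HOL-Real_Asymp.Real_Asymp"
begin

text \<open>As \<open>\<lambda> \<rightarrow> \<infinity>\<close>, \<open>\<lambda> \<phi>\<^sub>\<lambda>(x)\<close> is uniformly within \<open>1/(\<lambda>+1)\<close> of \<open>1 - x\<close> on \<open>[0,1]\<close>, so the
  copula value \<open>x\<close> nearly solves \<open>1 - x = (1 - u\<^sub>1) + (1 - u\<^sub>2)\<close>, unless it is \<open>0\<close> because
  \<open>\<phi>\<^sub>\<lambda>(u\<^sub>1) + \<phi>\<^sub>\<lambda>(u\<^sub>2) \<ge> \<phi>\<^sub>\<lambda>(0)\<close>. As \<open>\<lambda> \<rightarrow> -\<infinity>\<close>, the term \<open>x\<^bsup>\<lambda>+1\<^esup>\<close> dominates: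
  for \<open>0 < a < m = min u\<^sub>1 u\<^sub>2\<close> eventually \<open>\<phi>\<^sub>\<lambda>(a) > 2 \<phi>\<^sub>\<lambda>(m) \<ge> \<phi>\<^sub>\<lambda>(u\<^sub>1) + \<phi>\<^sub>\<lambda>(u\<^sub>2)\<close>,
  and since \<open>\<phi>\<^sub>\<lambda>\<close> is strictly decreasing this traps the copula value in \<open>[a, m]\<close>.\<close>

text \<open>At \<open>x = 0\<close> this agrees with \<^const>\<open>pd_phi\<close> only for \<open>\<lambda> > -1\<close>: in Isabelle
  \<open>0 powr p = 0\<close> even for \<open>p \<le> 0\<close>.\<close>

definition pd_gen :: "real \<Rightarrow> real \<Rightarrow> real" where
  "pd_gen lam x = (x powr (lam + 1) - x + lam * (1 - x)) / (lam * (lam + 1))"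

lemma pd_phi_eq_pd_gen:
  assumes "lam \<noteq> 0" "lam \<noteq> -1" "0 \<le> x" "0 < x \<or> -1 < lam"
  shows "pd_phi lam x = ereal (pd_gen lam x)"
  using assms by (auto simp: pd_phi_def pd_gen_def)

lemma pd_phi_0_infinite: "lam \<le> -1 \<Longrightarrow> pd_phi lam 0 = \<infinity>"
  by (simp add: pd_phi_def)

lemma pd_gen_1 [simp]: "pd_gen lam 1 = 0"
  by (simp add: pd_gen_def)

lemma continuous_on_pd_gen:
  assumes "S \<subseteq> {0..}" "0 \<in> S \<Longrightarrow> -1 < lam"
  shows "continuous_on S (pd_gen lam)"
proof -
  have "continuous_on S (\<lambda>x. x powr (lam + 1))"
    using assms by (intro continuous_on_powr' continuous_intros) force+
  then show ?thesis
    unfolding pd_gen_def divide_inverse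
    by (intro continuous_on_mult continuous_on_add continuous_on_diff continuous_on_const
        continuous_on_id)
qed

lemma has_real_derivative_pd_gen:
  assumes "lam \<noteq> 0" "lam \<noteq> -1" "0 < x"
  shows "(pd_gen lam has_real_derivative (x powr lam - 1) / lam) (at x)"
proof -
  have "(pd_gen lam has_real_derivative
         ((lam + 1) * x powr lam - 1 - lam) / (lam * (lam + 1))) (at x)"
    unfolding pd_gen_def using assms
    by (auto intro!: derivative_eq_intros simp: powr_diff)
  moreover have "(lam + 1) * x powr lam - 1 - lam = (lam + 1) * (x powr lam - 1)"
    by (simp add: algebra_simps)
  ultimately show ?thesis
    using assms(2) by simp
qed

lemma pd_gen_strict_decreasing:
  assumes "lam \<noteq> 0" "lam \<noteq> -1" "0 \<le> a" "a < b" "b \<le> 1" "0 < a \<or> -1 < lam"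
  shows "pd_gen lam b < pd_gen lam a"
proof -
  have "continuous_on {a..b} (pd_gen lam)"
    using assms by (intro continuous_on_pd_gen) auto
  moreover have "pd_gen lam differentiable (at x)" if "a < x" for x
    using has_real_derivative_pd_gen[OF assms(1,2), of x] that assms(3) real_differentiable_def
    by force
  ultimately obtain l z where z: "a < z" "z < b" "(pd_gen lam has_real_derivative l) (at z)"
      and mvt: "pd_gen lam b - pd_gen lam a = (b - a) * l"
    using MVT[OF assms(4)] by blast
  have "l = (z powr lam - 1) / lam"
    using DERIV_unique[OF z(3) has_real_derivative_pd_gen[OF assms(1,2)]] z(1) assms(3) by simp
  moreover have "(z powr lam - 1) / lam < 0"
  proof (cases "lam > 0")
    case True
    then have "z powr lam < 1" using powr_less_mono2[OF True, of z 1] z assms by simp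
    then show ?thesis using True by (simp add: divide_neg_pos)
  next
    case False
    then have "1 < z powr lam"
      using powr_less_mono2_neg[of lam z 1] z assms by simp
    then show ?thesis using False assms(1) by (simp add: divide_pos_neg)
  qed
  ultimately have "(b - a) * l < 0"
    using assms(4) by (metis diff_gt_0_iff_gt mult_pos_neg)
  with mvt show ?thesis by simp
qed

lemma pd_phi_strict_antimono:
  assumes "lam \<noteq> 0" "lam \<noteq> -1" "0 \<le> a" "a < b" "b \<le> 1"
  shows "pd_phi lam b < pd_phi lam a"
proof (cases "0 < a \<or> -1 < lam")
  case True
  then show ?thesis
    using assms pd_gen_strict_decreasing[OF assms] by (simp add: pd_phi_eq_pd_gen)
next
  case False
  then show ?thesis
    using assms by (simp add: pd_phi_eq_pd_gen pd_phi_0_infinite)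
qed

lemma pd_phi_antimono:
  assumes "lam \<noteq> 0" "lam \<noteq> -1" "0 \<le> a" "a \<le> b" "b \<le> 1"
  shows "pd_phi lam b \<le> pd_phi lam a"
  using pd_phi_strict_antimono[OF assms(1-3) _ assms(5)] assms(4)
  by (cases "a = b") (auto intro: less_imp_le)

lemma pd_phi_nonneg:
  assumes "lam \<noteq> 0" "lam \<noteq> -1" "x \<in> {0..1}"
  shows "0 \<le> pd_phi lam x"
  using pd_phi_antimono[OF assms(1,2), of x 1] assms by (simp add: pd_phi_eq_pd_gen zero_ereal_def)

lemma pd_phi_le_imp_ge:
  assumes "lam \<noteq> 0" "lam \<noteq> -1" "u \<in> {0..1}" "x \<le> 1" "pd_phi lam u \<le> pd_phi lam x"
  shows "x \<le> u"
proof (rule ccontr)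
  assume "\<not> x \<le> u"
  then have "pd_phi lam x < pd_phi lam u"
    using pd_phi_strict_antimono[OF assms(1,2), of u x] assms(3,4) by simp
  with assms(5) show False
    by simp
qed

lemma pd_phi_less_imp_gt:
  assumes "lam \<noteq> 0" "lam \<noteq> -1" "0 \<le> u" "a \<le> 1" "pd_phi lam u < pd_phi lam a"
  shows "a < u"
proof (rule ccontr)
  assume "\<not> a < u"
  then have "pd_phi lam a \<le> pd_phi lam u"
    using pd_phi_antimono[OF assms(1,2), of u a] assms(3,4) by simp
  with assms(5) show False
    by simp
qed

lemma pd_gen_IVT:
  assumes "a \<in> {0..1}" "0 < a \<or> -1 < lam" "0 \<le> t" "t \<le> pd_gen lam a"
  obtains x where "x \<in> {a..1}" "pd_gen lam x = t"
  using IVT2'[of "pd_gen lam" 1 t a] continuous_on_pd_gen[of "{a..1}" lam] assms by auto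

lemma pd_phi_pinv_pd_phi:
  assumes "lam \<noteq> 0" "lam \<noteq> -1" "x \<in> {0..1}" "pd_phi lam x < pd_phi lam 0"
  shows "pd_phi_pinv lam (pd_phi lam x) = x"
proof -
  have "z = x" if "z \<in> {0..1}" "pd_phi lam z = pd_phi lam x" for z
    using pd_phi_strict_antimono[OF assms(1,2), of z x] pd_phi_strict_antimono[OF assms(1,2), of x z]
      that assms(3) by (cases z x rule: linorder_cases) auto
  then have "(THE z. z \<in> {0..1} \<and> pd_phi lam z = pd_phi lam x) = x"
    using assms(3) by blast
  then show ?thesis
    using assms pd_phi_nonneg by (simp add: pd_phi_pinv_def)
qed

lemma pd_phi_pinv_eq_0: "pd_phi lam 0 \<le> t \<Longrightarrow> pd_phi_pinv lam t = 0"
  by (auto simp: pd_phi_pinv_def)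

lemma pd_copula_eqI:
  assumes "lam \<noteq> 0" "lam \<noteq> -1" "x \<in> {0..1}"
    and "pd_phi lam x = pd_phi lam u1 + pd_phi lam u2" "pd_phi lam x < pd_phi lam 0"
  shows "pd_copula lam u1 u2 = x"
  using pd_phi_pinv_pd_phi[OF assms(1-3,5)] assms(4) by (simp add: pd_copula_def)

lemma pd_gen_0: "-1 < lam \<Longrightarrow> lam \<noteq> 0 \<Longrightarrow> pd_gen lam 0 = 1 / (lam + 1)"
  by (simp add: pd_gen_def)

lemma pd_gen_scaled_bounds:
  assumes "0 < lam" "x \<in> {0..1}"
  shows "1 - x - 1 / (lam + 1) \<le> lam * pd_gen lam x" "lam * pd_gen lam x \<le> 1 - x"
proof -
  have "lam * pd_gen lam x = (x powr (lam + 1) - x + lam * (1 - x)) / (lam + 1)"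
    using assms(1) by (simp add: pd_gen_def)
  also have "\<dots> = (1 - x) + (x powr (lam + 1) - 1) / (lam + 1)"
    using assms(1) by (simp add: field_simps)
  finally have eq: "lam * pd_gen lam x = (1 - x) + (x powr (lam + 1) - 1) / (lam + 1)" .
  have "x powr (lam + 1) \<le> 1"
    using assms by (auto intro: powr_le1)
  then have "- 1 / (lam + 1) \<le> (x powr (lam + 1) - 1) / (lam + 1)"
      "(x powr (lam + 1) - 1) / (lam + 1) \<le> 0"
    using assms(1) divide_right_mono[of "- 1" "x powr (lam + 1) - 1" "lam + 1"]
    by (auto intro!: divide_nonpos_pos)
  then show "1 - x - 1 / (lam + 1) \<le> lam * pd_gen lam x" "lam * pd_gen lam x \<le> 1 - x"
    unfolding eq by auto
qed

lemma dist_pd_copula_max_le: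
  assumes "0 < lam" "u1 \<in> {0..1}" "u2 \<in> {0..1}"
  shows "dist (pd_copula lam u1 u2) (max (u1 + u2 - 1) 0) \<le> 2 / (lam + 1)"
proof -
  have lam: "lam \<noteq> 0" "lam \<noteq> -1" using assms(1) by auto
  have phi: "pd_phi lam x = ereal (pd_gen lam x)" if "x \<in> {0..1}" for x
    using that assms(1) by (simp add: pd_phi_eq_pd_gen)
  define t where "t = pd_gen lam u1 + pd_gen lam u2"
  have sum: "pd_phi lam u1 + pd_phi lam u2 = ereal t"
    using assms by (simp add: phi t_def)
  have "0 \<le> t"
    using pd_phi_nonneg[OF lam assms(2)] pd_phi_nonneg[OF lam assms(3)] assms by (simp add: phi t_def)
  have scaled_t: "lam * t = lam * pd_gen lam u1 + lam * pd_gen lam u2"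
    by (simp add: t_def algebra_simps)
  note bounds = pd_gen_scaled_bounds[OF assms(1)]
  note b1 = bounds[OF assms(2)] and b2 = bounds[OF assms(3)]
  have e: "0 < 1 / (lam + 1)" "2 / (lam + 1) = 2 * (1 / (lam + 1))"
    using assms(1) by auto
  show ?thesis
  proof (cases "t < pd_gen lam 0")
    case True
    obtain x where x: "x \<in> {0..1}" "pd_gen lam x = t"
      using pd_gen_IVT[of 0 lam t] True \<open>0 \<le> t\<close> assms(1) by auto
    have "pd_copula lam u1 u2 = x"
      using x True assms by (intro pd_copula_eqI) (auto simp: phi t_def)
    then show ?thesis
      using bounds[OF x(1)] b1 b2 x e scaled_t by (auto simp: dist_real_def)
  next
    case False
    then have "pd_copula lam u1 u2 = 0"
      unfolding pd_copula_def sum using assms(1) by (intro pd_phi_pinv_eq_0) (simp add: phi)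
    moreover have "lam * pd_gen lam 0 \<le> lam * t"
      using False assms(1) by simp
    moreover have "lam * pd_gen lam 0 = 1 - 1 / (lam + 1)"
      using assms(1) by (simp add: pd_gen_0 field_simps)
    ultimately show ?thesis
      using b1 b2 e scaled_t by (auto simp: dist_real_def)
  qed
qed

lemma pd_copula_between:
  assumes "lam \<noteq> 0" "lam \<noteq> -1" "a \<in> {0<..1}" "u1 \<in> {0..1}" "u2 \<in> {0..1}"
    and less: "pd_phi lam u1 + pd_phi lam u2 < pd_phi lam a"
  shows "a \<le> pd_copula lam u1 u2 \<and> pd_copula lam u1 u2 \<le> min u1 u2"
proof -
  note nonneg = pd_phi_nonneg[OF assms(1,2)]
  have le_sum: "pd_phi lam u1 \<le> pd_phi lam u1 + pd_phi lam u2"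
      "pd_phi lam u2 \<le> pd_phi lam u1 + pd_phi lam u2"
    using nonneg assms(4,5) by (auto intro: add_increasing add_increasing2)
  have "a < u1" "a < u2"
    using pd_phi_less_imp_gt[OF assms(1,2)] le_sum less assms(3-5) by (simp_all add: le_less_trans)
  then have phi: "pd_phi lam x = ereal (pd_gen lam x)" if "x \<in> {a..1}" for x
    using that assms(1-3) by (simp add: pd_phi_eq_pd_gen)
  define t where "t = pd_gen lam u1 + pd_gen lam u2"
  have sum: "pd_phi lam u1 + pd_phi lam u2 = ereal t"
    using \<open>a < u1\<close> \<open>a < u2\<close> assms(4,5) by (simp add: phi t_def)
  have "0 \<le> t"
    using nonneg[OF assms(4)] nonneg[OF assms(5)] \<open>a < u1\<close> \<open>a < u2\<close> assms(4,5)
    by (simp add: phi t_def)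
  moreover have t_less: "t < pd_gen lam a"
    using less assms(3) by (simp add: sum phi)
  ultimately obtain x where x: "x \<in> {a..1}" "pd_gen lam x = t"
    using pd_gen_IVT[of a lam t] assms(3) by auto
  then have phi_x: "pd_phi lam x = pd_phi lam u1 + pd_phi lam u2"
    by (simp add: phi sum)
  also have "\<dots> < pd_phi lam a"
    by (fact less)
  also have "\<dots> \<le> pd_phi lam 0"
    using pd_phi_antimono[OF assms(1,2), of 0 a] assms(3) by simp
  finally have "pd_copula lam u1 u2 = x"
    using x assms(3) phi_x by (intro pd_copula_eqI[OF assms(1,2)]) auto
  moreover have "x \<le> u1" "x \<le> u2"
    using pd_phi_le_imp_ge[OF assms(1,2)] le_sum assms(4,5) x(1) by (simp_all add: phi_x)
  ultimately show ?thesis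
    using x by simp
qed

lemma pd_gen_eventually_gt_double:
  assumes "0 < a" "a < m" "m \<le> 1"
  shows "eventually (\<lambda>lam. 2 * pd_gen lam m < pd_gen lam a) at_bot"
proof -
  have "eventually (\<lambda>lam. 3 - lam < r powr (lam + 1)) at_bot" if "0 < r" "r < 1" for r :: real
    using that by real_asymp
  \<comment> \<open>\<open>(a/m)\<^bsup>\<lambda>+1\<^esup>\<close> grows exponentially as \<open>\<lambda> \<rightarrow> -\<infinity>\<close> and absorbs all the other terms\<close>
  then have "eventually (\<lambda>lam. 3 - lam < (a / m) powr (lam + 1)) at_bot"
    using assms by simp
  then show ?thesis
    using eventually_gt_at_bot[of "-1 :: real"]
  proof eventually_elim
    case (elim lam)
    define q where "q = lam + 1"
    have "q < 0" "0 < lam * (lam + 1)"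
      using elim(2) by (auto simp: q_def mult_neg_neg)
    have "1 \<le> m powr q"
      using powr_mono2'[of q m 1] \<open>q < 0\<close> assms by simp
    have "a powr q = (a / m) powr q * m powr q"
      using assms by (simp add: powr_divide)
    also have "\<dots> \<ge> (3 - lam) * m powr q"
      using elim(1) \<open>1 \<le> m powr q\<close> by (intro mult_right_mono) (simp_all add: q_def)
    finally have "2 * m powr q + (1 - lam) \<le> a powr q"
      using \<open>1 \<le> m powr q\<close> elim(2) mult_right_mono[of 1 "m powr q" "1 - lam"]
      by (simp add: algebra_simps)
    moreover have "lam * a < 0"
      using elim(2) assms(1) by (simp add: mult_neg_pos)
    then have "a powr q - 1 + lam < a powr q - a + lam * (1 - a)"
      using assms by (simp add: algebra_simps)
    moreover have "lam * (1 - m) \<le> 0"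
      using elim(2) assms(3) by (intro mult_nonpos_nonneg) auto
    then have "2 * (m powr q - m + lam * (1 - m)) < 2 * m powr q"
      using assms by simp
    ultimately have "2 * (m powr q - m + lam * (1 - m)) < a powr q - a + lam * (1 - a)"
      by linarith
    then show ?case
      using divide_strict_right_mono[OF _ \<open>0 < lam * (lam + 1)\<close>]
      by (simp add: pd_gen_def q_def)
  qed
qed

lemma pd_copula_eq_0_on_boundary:
  assumes "lam \<le> -1" "u1 = 0 \<or> u2 = 0"
  shows "pd_copula lam u1 u2 = 0"
proof -
  have "pd_phi lam u \<noteq> -\<infinity>" for u
    by (simp add: pd_phi_def)
  then have infinite_sum: "pd_phi lam u1 + pd_phi lam u2 = \<infinity>"
    using assms pd_phi_0_infinite[OF assms(1)] by auto
  show ?thesis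
    unfolding pd_copula_def infinite_sum by (rule pd_phi_pinv_eq_0) simp
qed

lemma pd_copula_eventually_between:
  assumes "u1 \<in> {0..1}" "u2 \<in> {0..1}" "0 < a" "a < min u1 u2"
  shows "eventually (\<lambda>lam. a \<le> pd_copula lam u1 u2 \<and> pd_copula lam u1 u2 \<le> min u1 u2) at_bot"
proof -
  define m where "m = min u1 u2"
  have m: "a < m" "m \<le> u1" "m \<le> u2" "m \<le> 1"
    using assms by (auto simp: m_def)
  show ?thesis
    using pd_gen_eventually_gt_double[OF assms(3) m(1,4)] eventually_gt_at_bot[of "-1 :: real"]
    unfolding m_def[symmetric]
  proof eventually_elim
    case (elim lam)
    have lam: "lam \<noteq> 0" "lam \<noteq> -1"
      using elim(2) by auto
    have le_m: "pd_phi lam u \<le> ereal (pd_gen lam m)" if "u \<in> {0..1}" "m \<le> u" for u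
      using pd_phi_antimono[OF lam, of m u] pd_phi_eq_pd_gen[OF lam, of m] that m(1) assms(3)
      by simp
    have "pd_phi lam u1 + pd_phi lam u2 \<le> ereal (pd_gen lam m) + ereal (pd_gen lam m)"
      using le_m[OF assms(1) m(2)] le_m[OF assms(2) m(3)] by (rule add_mono)
    also have "\<dots> < pd_phi lam a"
      using elim(1) pd_phi_eq_pd_gen[OF lam, of a] assms(3) by simp
    finally have "pd_phi lam u1 + pd_phi lam u2 < pd_phi lam a" .
    moreover have "a \<in> {0<..1}"
      using assms(3) m(1,4) by simp
    ultimately show ?case
      using pd_copula_between[OF lam _ assms(1,2)] by (simp add: m_def)
  qed
qed

lemma pd_copula_tendsto_at_top:
  assumes "u1 \<in> {0..1}" "u2 \<in> {0..1}"
  shows "((\<lambda>lam. pd_copula lam u1 u2) \<longlongrightarrow> max (u1 + u2 - 1) 0) at_top"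
proof (rule metric_tendsto_imp_tendsto)
  show "((\<lambda>lam :: real. 2 / (lam + 1)) \<longlongrightarrow> 0) at_top"
    by real_asymp
  show "eventually (\<lambda>lam. dist (pd_copula lam u1 u2) (max (u1 + u2 - 1) 0)
                          \<le> dist (2 / (lam + 1)) 0) at_top"
    using eventually_gt_at_top[of "0 :: real"]
  proof eventually_elim
    case (elim lam)
    then have "dist (2 / (lam + 1)) 0 = 2 / (lam + 1)"
      by (simp add: dist_real_def)
    then show ?case
      using dist_pd_copula_max_le[OF elim assms] by simp
  qed
qed

lemma pd_copula_tendsto_at_bot:
  assumes "u1 \<in> {0..1}" "u2 \<in> {0..1}"
  shows "((\<lambda>lam. pd_copula lam u1 u2) \<longlongrightarrow> min u1 u2) at_bot"
proof (cases "min u1 u2 = 0")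
  case True
  then have boundary: "u1 = 0 \<or> u2 = 0"
    by (auto simp: min_def split: if_splits)
  have "eventually (\<lambda>lam. pd_copula lam u1 u2 = min u1 u2) at_bot"
    using eventually_le_at_bot[of "-1 :: real"]
    by eventually_elim (simp add: True pd_copula_eq_0_on_boundary boundary)
  then show ?thesis
    by (rule tendsto_eventually)
next
  case False
  then have "0 < min u1 u2"
    using assms by auto
  show ?thesis
    unfolding tendsto_iff
  proof (intro allI impI)
    fix e :: real
    assume "0 < e"
    define a where "a = min u1 u2 - min e (min u1 u2) / 2"
    have "0 < a" "a < min u1 u2" "min u1 u2 - a < e"
      using \<open>0 < min u1 u2\<close> \<open>0 < e\<close> by (auto simp: a_def)
    then show "eventually (\<lambda>lam. dist (pd_copula lam u1 u2) (min u1 u2) < e) at_bot"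
      using pd_copula_eventually_between[OF assms, of a]
      by (auto elim!: eventually_mono simp: dist_real_def)
  qed
qed

theorem proposition3:
  fixes u1 u2 :: real
  assumes "u1 \<in> {0..1}" and "u2 \<in> {0..1}"
  shows "((\<lambda>lam. pd_copula lam u1 u2) \<longlongrightarrow> max (u1 + u2 - 1) 0) at_top \<and>
         ((\<lambda>lam. pd_copula lam u1 u2) \<longlongrightarrow> min u1 u2) at_bot"
  using pd_copula_tendsto_at_top[OF assms] pd_copula_tendsto_at_bot[OF assms] ..

end
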